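(* Let $(G,k)$ be an instance of PITVD, let $S\subseteq V(G)$ be such that $G-S$ is a simple (prop-int, tree)-graph, let $V_1$ be the set of vertices of the connected components of $G-S$ that contain a cycle, and fix a clique partition $\mathcal{K}$ of $G[V_1]$ obtained from a proper interval ordering. Let $C$ be a connected component of $G[V_1]$ and $\mathcal{K}_C$ the set of cliques of $\mathcal{K}$ contained in $C$. If a vertex $v\in S$ is adjacent to a vertex of each of at least $6k+5$ distinct cliques of $\mathcal{K}_C$, then $(G,k)$ is a yes-instance of PITVD if and only if $(G-v,k-1)$ is a yes-instance of PITVD.
   Context: PITVD: the input is an undirected multigraph $G$ (no self-loops) and an integer $k$; the question is whether there exists $X\subseteq V(G)$ with $|X|\le k$ such that $G-X$ is a simple graph and every connected component of $G-X$ is a proper interval graph or a tree. A simple graph is a (prop-int, tree)-graph if each component is a proper interval graph or a tree. A proper interval graph has a representation by closed unit-length intervals $I_u=[\mathrm{lp}_u,\mathrm{rp}_u]$, adjacency meaning intersection; a proper interval ordering is an ordering $v_1,\dots,v_n$ of the vertices with $\mathrm{lp}_{v_1}<\dots<\mathrm{lp}_{v_n}$. The clique partition from such an ordering is built greedily: $K_1$ consists of $v_1$ and all vertices $v_i$ whose left endpoint lies in $I_{v_1}$ (a prefix $v_1,\dots,v_i$ of the ordering); remove $K_1$ and repeat on the remaining ordered vertices to get $K_2$, and so on, giving the sequence $\mathcal{K}=(K_1,\dots,K_t)$. *)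

theory Defs
  imports Complex_Main
begin

text \<open>A finite undirected multigraph without self-loops is a pair (V, m) of a vertex set V
and an edge-multiplicity function m (m u v = number of edges between u and v).\<close>

type_synonym 'a mgraph = "'a set \<times> ('a \<Rightarrow> 'a \<Rightarrow> nat)"

definition multigraph :: "'a mgraph \<Rightarrow> bool" where
  "multigraph G \<longleftrightarrow> finite (fst G) \<and> (\<forall>u v. snd G u v = snd G v u)
     \<and> (\<forall>v. snd G v v = 0) \<and> (\<forall>u v. 0 < snd G u v \<longrightarrow> u \<in> fst G \<and> v \<in> fst G)"

definition adj :: "'a mgraph \<Rightarrow> 'a \<Rightarrow> 'a \<Rightarrow> bool" where
  "adj G u v \<longleftrightarrow> 0 < snd G u v"

definition del_vs :: "'a mgraph \<Rightarrow> 'a set \<Rightarrow> 'a mgraph" where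
  "del_vs G X = (fst G - X, \<lambda>u v. if u \<in> X \<or> v \<in> X then 0 else snd G u v)"

definition induced :: "'a mgraph \<Rightarrow> 'a set \<Rightarrow> 'a mgraph" where
  "induced G W = del_vs G (fst G - W)"

definition simple_mg :: "'a mgraph \<Rightarrow> bool" where
  "simple_mg G \<longleftrightarrow> (\<forall>u v. snd G u v \<le> 1)"

definition reach_in :: "'a mgraph \<Rightarrow> 'a set \<Rightarrow> 'a \<Rightarrow> 'a \<Rightarrow> bool" where
  "reach_in G W = (\<lambda>x y. x \<in> W \<and> y \<in> W \<and> adj G x y)\<^sup>*\<^sup>*"

definition connected_in :: "'a mgraph \<Rightarrow> 'a set \<Rightarrow> bool" where
  "connected_in G W \<longleftrightarrow> W \<noteq> {} \<and> (\<forall>x\<in>W. \<forall>y\<in>W. reach_in G W x y)"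

definition components :: "'a mgraph \<Rightarrow> 'a set set" where
  "components G = {{y. reach_in G (fst G) x y} | x. x \<in> fst G}"

definition has_cycle_in :: "'a mgraph \<Rightarrow> 'a set \<Rightarrow> bool" where
  "has_cycle_in G W \<longleftrightarrow> (\<exists>xs. 3 \<le> length xs \<and> distinct xs \<and> set xs \<subseteq> W
      \<and> (\<forall>i. Suc i < length xs \<longrightarrow> adj G (xs ! i) (xs ! Suc i))
      \<and> adj G (last xs) (hd xs))"

definition is_tree_on :: "'a mgraph \<Rightarrow> 'a set \<Rightarrow> bool" where
  "is_tree_on G W \<longleftrightarrow> connected_in G W \<and> \<not> has_cycle_in G W"

text \<open>lp is a unit interval representation (intervals [lp u, lp u + 1]) of the subgraph
induced by W.\<close>
definition unit_interval_rep :: "'a mgraph \<Rightarrow> 'a set \<Rightarrow> ('a \<Rightarrow> real) \<Rightarrow> bool" where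
  "unit_interval_rep G W lp \<longleftrightarrow>
     (\<forall>u\<in>W. \<forall>w\<in>W. u \<noteq> w \<longrightarrow> (adj G u w \<longleftrightarrow> \<bar>lp u - lp w\<bar> \<le> 1))"

definition prop_int_on :: "'a mgraph \<Rightarrow> 'a set \<Rightarrow> bool" where
  "prop_int_on G W \<longleftrightarrow> (\<exists>lp. unit_interval_rep G W lp)"

definition pit_graph :: "'a mgraph \<Rightarrow> bool" where
  "pit_graph G \<longleftrightarrow> (\<forall>C\<in>components G. prop_int_on G C \<or> is_tree_on G C)"

definition pitvd_yes :: "'a mgraph \<Rightarrow> int \<Rightarrow> bool" where
  "pitvd_yes G k \<longleftrightarrow> (\<exists>X. X \<subseteq> fst G \<and> int (card X) \<le> k
      \<and> simple_mg (del_vs G X) \<and> pit_graph (del_vs G X))"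

text \<open>Greedy clique partition w.r.t. a proper interval ordering given by left endpoints lp.\<close>
inductive greedy_cp :: "('a \<Rightarrow> real) \<Rightarrow> 'a set \<Rightarrow> 'a set list \<Rightarrow> bool" for lp where
  Nil: "greedy_cp lp {} []"
| Cons: "v \<in> W \<Longrightarrow> (\<forall>u\<in>W. lp v \<le> lp u) \<Longrightarrow> K = {u \<in> W. lp v \<le> lp u \<and> lp u \<le> lp v + 1}
     \<Longrightarrow> greedy_cp lp (W - K) Ks \<Longrightarrow> greedy_cp lp W (K # Ks)"

end

theory Submission
  imports Defs
begin

(* Suppose a solution X of size at most k avoids v, and pick one neighbour of v in each of
   the cliques of K_C that v sees. The greedy partition puts any three vertices whose left
   endpoints lie in a unit interval into at most two cliques, so no three chosen neighbours
   do. Sorted by left endpoint and cut into k + 1 blocks of five (5(k + 1) <= 6k + 5), they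
   contain a block spanning a stretch of C that X misses. Its first, middle and last vertices
   a, b, c are pairwise nonadjacent neighbours of v, and as C is a connected unit interval
   graph, the vertices of C between a and c form a path from a to c. So the component of v in
   G - X contains a cycle through v and the claw with centre v and leaves a, b, c: it is
   neither a tree nor a proper interval graph. *)

lemma fst_del_vs [simp]: "fst (del_vs G X) = fst G - X"
  by (simp add: del_vs_def)

lemma adj_del_vs: "adj (del_vs G X) u w \<longleftrightarrow> u \<notin> X \<and> w \<notin> X \<and> adj G u w"
  by (auto simp: adj_def del_vs_def)

lemma del_vs_del_vs: "del_vs (del_vs G A) B = del_vs G (A \<union> B)"
  unfolding del_vs_def by (auto intro!: ext)

lemma multigraph_del_vs: "multigraph G \<Longrightarrow> multigraph (del_vs G X)"
  by (auto simp: multigraph_def del_vs_def)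

lemma adj_sym: "multigraph G \<Longrightarrow> adj G u w \<Longrightarrow> adj G w u"
  by (metis adj_def multigraph_def)

lemma adj_in_fst: "multigraph G \<Longrightarrow> adj G u w \<Longrightarrow> u \<in> fst G \<and> w \<in> fst G"
  by (metis adj_def multigraph_def)

lemma fst_induced: "fst (induced G U) = fst G \<inter> U"
  by (auto simp: induced_def)

lemma adj_induced: "u \<in> U \<Longrightarrow> w \<in> U \<Longrightarrow> adj (induced G U) u w \<longleftrightarrow> adj G u w"
  by (simp add: induced_def adj_del_vs)

lemma unit_interval_rep_of_induced:
  "unit_interval_rep (induced G U) U l \<Longrightarrow> W \<subseteq> U \<Longrightarrow> unit_interval_rep G W l"
  unfolding unit_interval_rep_def by (auto simp: adj_induced subsetD)

lemma connected_in_induced: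
  assumes "W \<subseteq> U"
  shows "connected_in (induced G U) W \<longleftrightarrow> connected_in G W"
proof -
  have "reach_in (induced G U) W = reach_in G W"
    unfolding reach_in_def using assms
    by (intro arg_cong[where f = rtranclp] ext) (auto simp: adj_induced subsetD)
  then show ?thesis by (simp add: connected_in_def)
qed

lemma connected_in_crossing_edge:
  assumes "connected_in G W" "x \<in> W" "y \<in> W" "P x" "\<not> P y"
  shows "\<exists>a\<in>W. \<exists>b\<in>W. adj G a b \<and> P a \<and> \<not> P b"
proof -
  have "reach_in G W x y" using assms(1-3) by (simp add: connected_in_def)
  then show ?thesis using assms(4,5) unfolding reach_in_def
    by (induction rule: rtranclp_induct) auto
qed

lemma components_subset: "D \<in> components H \<Longrightarrow> D \<subseteq> fst H"
  unfolding components_def reach_in_def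
  by (auto elim: rtranclp.cases)

lemma components_adj_closed:
  assumes "multigraph H" "D \<in> components H" "x \<in> D" "adj H x y"
  shows "y \<in> D"
  using assms adj_in_fst[OF assms(1,4)]
  by (auto simp: components_def reach_in_def intro: rtranclp.rtrancl_into_rtrancl)

lemma components_connected_in:
  assumes mg: "multigraph H" and D: "D \<in> components H"
  shows "connected_in H D"
proof -
  obtain x where x: "x \<in> fst H" and D_eq: "D = {y. reach_in H (fst H) x y}"
    using D by (auto simp: components_def)
  define R where "R = (\<lambda>a b. a \<in> D \<and> b \<in> D \<and> adj H a b)"
  have "R\<^sup>*\<^sup>* x y" if "reach_in H (fst H) x y" for y
    using that unfolding reach_in_def
  proof (induction rule: rtranclp_induct)
    case (step y z)
    then have "y \<in> D" "z \<in> D"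
      by (auto simp: D_eq reach_in_def intro: rtranclp.rtrancl_into_rtrancl)
    with step show ?case by (auto simp: R_def intro: rtranclp.rtrancl_into_rtrancl)
  qed simp
  then have from_x: "R\<^sup>*\<^sup>* x y" if "y \<in> D" for y
    using that D_eq by blast
  have "symp R\<^sup>*\<^sup>*"
    by (rule symp_rtranclp) (auto simp: R_def symp_def intro: adj_sym[OF mg])
  then have "R\<^sup>*\<^sup>* y1 y2" if "y1 \<in> D" "y2 \<in> D" for y1 y2
    using from_x[OF that(1)] from_x[OF that(2)] by (meson rtranclp_trans sympD)
  moreover have "x \<in> D" by (simp add: D_eq reach_in_def)
  ultimately show ?thesis by (auto simp: connected_in_def reach_in_def R_def)
qed

lemma components_induced_connected_in:
  assumes "multigraph G" "C \<in> components (induced G U)"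
  shows "connected_in G C"
proof -
  have "multigraph (induced G U)"
    unfolding induced_def by (rule multigraph_del_vs[OF assms(1)])
  then have "connected_in (induced G U) C" using assms(2) by (rule components_connected_in)
  moreover have "C \<subseteq> U" using components_subset[OF assms(2)] by (simp add: fst_induced)
  ultimately show ?thesis by (simp add: connected_in_induced)
qed

lemma walk_subset_component:
  assumes mg: "multigraph H" and D: "D \<in> components H" "hd xs \<in> D"
    and walk: "\<forall>i. Suc i < length xs \<longrightarrow> adj H (xs ! i) (xs ! Suc i)"
  shows "set xs \<subseteq> D"
proof -
  have "xs ! i \<in> D" if "i < length xs" for i
    using that
  proof (induction i)
    case 0
    then show ?case using D(2) by (simp add: hd_conv_nth)
  next
    case (Suc i)
    then show ?case using walk components_adj_closed[OF mg D(1)] by simp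
  qed
  then show ?thesis by (auto simp: in_set_conv_nth)
qed

lemma unit_interval_rep_claw_free:
  assumes rep: "unit_interval_rep H W l"
    and "v \<in> W" "a \<in> W" "b \<in> W" "c \<in> W" "v \<notin> {a, b, c}" "a \<noteq> b" "a \<noteq> c" "b \<noteq> c"
    and "adj H v a" "adj H v b" "adj H v c"
  shows "adj H a b \<or> adj H a c \<or> adj H b c"
proof -
  have "\<bar>l v - l a\<bar> \<le> 1" "\<bar>l v - l b\<bar> \<le> 1" "\<bar>l v - l c\<bar> \<le> 1"
    using assms by (auto simp: unit_interval_rep_def)
  then have "\<bar>l a - l b\<bar> \<le> 1 \<or> \<bar>l a - l c\<bar> \<le> 1 \<or> \<bar>l b - l c\<bar> \<le> 1"
    by linarith
  then show ?thesis using assms by (auto simp: unit_interval_rep_def)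
qed

lemma unit_interval_consecutive_adj:
  assumes rep: "unit_interval_rep G C lp" and conn: "connected_in G C"
    and "p \<in> C" "q \<in> C" "lp p < lp q"
    and no_between: "\<not> (\<exists>u\<in>C. lp p < lp u \<and> lp u < lp q)"
  shows "adj G p q"
proof -
  obtain x y where xy: "x \<in> C" "y \<in> C" "adj G x y" "lp x \<le> lp p" "lp p < lp y"
    using connected_in_crossing_edge[OF conn \<open>p \<in> C\<close> \<open>q \<in> C\<close>, of "\<lambda>u. lp u \<le> lp p"]
      \<open>lp p < lp q\<close> by force
  then have "x \<noteq> y" by auto
  then have "\<bar>lp x - lp y\<bar> \<le> 1"
    using rep xy(1-3) unfolding unit_interval_rep_def by blast
  moreover have "lp q \<le> lp y" using no_between xy by force
  ultimately have "\<bar>lp p - lp q\<bar> \<le> 1" using xy \<open>lp p < lp q\<close> by linarith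
  moreover have "p \<noteq> q" using \<open>lp p < lp q\<close> by auto
  ultimately show ?thesis using rep assms(3,4) unfolding unit_interval_rep_def by blast
qed

lemma exists_sorted_list_by_key:
  fixes f :: "'a \<Rightarrow> 'b::linorder"
  assumes "finite A" "inj_on f A"
  shows "\<exists>xs. set xs = A \<and> distinct xs \<and> sorted_wrt (\<lambda>x y. f x < f y) xs"
proof -
  obtain xs0 where xs0: "set xs0 = A" "distinct xs0"
    using finite_distinct_list[OF assms(1)] by blast
  define xs where "xs = sort_key f xs0"
  have xs: "set xs = A" "distinct xs" using xs0 by (auto simp: xs_def)
  then have "sorted_wrt (<) (map f xs)"
    using assms(2) by (simp add: xs_def strict_sorted_iff distinct_map)
  then show ?thesis using xs by (auto simp: sorted_wrt_map)
qed

lemma unit_interval_path: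
  fixes lp :: "'a \<Rightarrow> real"
  assumes rep: "unit_interval_rep G C lp" and conn: "connected_in G C"
    and "finite C" "inj_on lp C" "a \<in> C" "c \<in> C" "lp a \<le> lp c"
  shows "\<exists>ys. distinct ys \<and> set ys = {u \<in> C. lp a \<le> lp u \<and> lp u \<le> lp c}
    \<and> hd ys = a \<and> last ys = c \<and> (\<forall>i. Suc i < length ys \<longrightarrow> adj G (ys ! i) (ys ! Suc i))"
proof -
  define T where "T = {u \<in> C. lp a \<le> lp u \<and> lp u \<le> lp c}"
  obtain ys where ys: "set ys = T" "distinct ys" and sorted: "sorted_wrt (\<lambda>x y. lp x < lp y) ys"
    using exists_sorted_list_by_key[of T lp] assms(3,4) by (auto simp: T_def intro: inj_on_subset)
  have less_iff: "lp (ys ! i) < lp (ys ! j) \<longleftrightarrow> i < j" if "i < length ys" "j < length ys" for i j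
    using sorted that by (metis linorder_neqE_nat not_less_iff_gr_or_eq sorted_wrt_iff_nth_less)
  have "a \<in> T" "c \<in> T" using assms(5-7) by (auto simp: T_def)
  then obtain i j where ij: "i < length ys" "ys ! i = a" "j < length ys" "ys ! j = c"
    using ys(1) by (metis in_set_conv_nth)
  have T_bounds: "lp a \<le> lp (ys ! k) \<and> lp (ys ! k) \<le> lp c" if "k < length ys" for k
    using that ys(1) nth_mem by (fastforce simp: T_def)
  have "i = 0" using T_bounds[of 0] ij(1,2) less_iff[of 0 i] by fastforce
  then have "hd ys = a" using ij(1,2) by (auto simp: hd_conv_nth)
  moreover have "j = length ys - 1"
    using T_bounds[of "length ys - 1"] ij(3,4) less_iff[of j "length ys - 1"] by fastforce
  then have "last ys = c" using ij(3,4) by (metis last_conv_nth list.size(3) not_less0)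
  moreover have "adj G (ys ! k) (ys ! Suc k)" if k: "Suc k < length ys" for k
  proof (rule unit_interval_consecutive_adj[OF rep conn])
    show "ys ! k \<in> C" "ys ! Suc k \<in> C" using k ys(1) nth_mem by (fastforce simp: T_def)+
    show "lp (ys ! k) < lp (ys ! Suc k)" using k less_iff by simp
    show "\<not> (\<exists>u\<in>C. lp (ys ! k) < lp u \<and> lp u < lp (ys ! Suc k))"
    proof
      assume "\<exists>u\<in>C. lp (ys ! k) < lp u \<and> lp u < lp (ys ! Suc k)"
      then obtain u where u: "u \<in> C" "lp (ys ! k) < lp u" "lp u < lp (ys ! Suc k)" by blast
      then have "u \<in> T" using T_bounds[of k] T_bounds[of "Suc k"] k by (auto simp: T_def)
      then obtain m where "m < length ys" "ys ! m = u" using ys(1) by (metis in_set_conv_nth)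
      then show False using u k less_iff[of k m] less_iff[of m "Suc k"] by auto
    qed
  qed
  ultimately show ?thesis using ys by (auto simp: T_def)
qed

lemma not_pit_graph_if_claw_on_cycle:
  assumes mg: "multigraph H"
    and path: "distinct ys" "hd ys = a" "last ys = c"
      "\<forall>i. Suc i < length ys \<longrightarrow> adj H (ys ! i) (ys ! Suc i)"
    and "b \<in> set ys" "v \<notin> set ys" "adj H v a" "adj H v b" "adj H v c"
    and "a \<noteq> b" "a \<noteq> c" "b \<noteq> c" "\<not> adj H a b" "\<not> adj H a c" "\<not> adj H b c"
  shows "\<not> pit_graph H"
proof -
  define D where "D = {y. reach_in H (fst H) v y}"
  have D: "D \<in> components H" "v \<in> D"
    using adj_in_fst[OF mg \<open>adj H v a\<close>] by (auto simp: D_def components_def reach_in_def)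
  have "ys \<noteq> []" using \<open>b \<in> set ys\<close> by auto
  then have abc: "a \<in> set ys" "b \<in> set ys" "c \<in> set ys"
    using path(2,3) \<open>b \<in> set ys\<close> by auto
  have walk: "\<forall>i. Suc i < length (v # ys) \<longrightarrow> adj H ((v # ys) ! i) ((v # ys) ! Suc i)"
  proof (intro allI impI)
    fix i assume "Suc i < length (v # ys)"
    then show "adj H ((v # ys) ! i) ((v # ys) ! Suc i)"
      using path(2,4) \<open>ys \<noteq> []\<close> \<open>adj H v a\<close> by (cases i) (auto simp: hd_conv_nth)
  qed
  have in_D: "set (v # ys) \<subseteq> D"
    using walk_subset_component[OF mg D(1) _ walk] D(2) by simp
  have "3 = card {a, b, c}" using \<open>a \<noteq> b\<close> \<open>a \<noteq> c\<close> \<open>b \<noteq> c\<close> by simp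
  also have "\<dots> \<le> card (set ys)" using abc by (intro card_mono) auto
  also have "\<dots> \<le> length (v # ys)" using card_length[of ys] by simp
  finally have "3 \<le> length (v # ys)" .
  moreover have "adj H (last (v # ys)) (hd (v # ys))"
    using \<open>ys \<noteq> []\<close> \<open>last ys = c\<close> adj_sym[OF mg \<open>adj H v c\<close>] by simp
  ultimately have "has_cycle_in H D"
    unfolding has_cycle_in_def using path(1) \<open>v \<notin> set ys\<close> in_D walk
    by (intro exI[of _ "v # ys"]) auto
  moreover have "\<not> prop_int_on H D"
    unfolding prop_int_on_def
    using unit_interval_rep_claw_free[of H D _ v a b c] in_D abc assms(6-)
    by auto
  ultimately show ?thesis using D(1) by (auto simp: pit_graph_def is_tree_on_def)
qed

definition unit_sparse :: "('a \<Rightarrow> real) \<Rightarrow> 'a set \<Rightarrow> bool" where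
  "unit_sparse f N \<longleftrightarrow> (\<forall>x\<in>N. \<forall>y\<in>N. \<forall>z\<in>N. f x < f y \<longrightarrow> f y < f z \<longrightarrow> f x + 1 < f z)"

lemma unit_sparse_image: "unit_sparse id (f ` N) \<longleftrightarrow> unit_sparse f N"
  by (auto simp: unit_sparse_def)

lemma disjoint_intervals_avoid_small_set:
  fixes lo hi :: "nat \<Rightarrow> real"
  assumes sep: "\<And>s t. s < t \<Longrightarrow> t \<le> n \<Longrightarrow> hi s < lo t"
    and "finite Q" "card Q \<le> n"
  shows "\<exists>t\<le>n. \<forall>q\<in>Q. q < lo t \<or> hi t < q"
proof (rule ccontr)
  assume "\<not> ?thesis"
  then have "\<forall>t. \<exists>q. t \<le> n \<longrightarrow> q \<in> Q \<and> lo t \<le> q \<and> q \<le> hi t"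
    by (auto simp: not_less)
  then obtain f where f: "\<And>t. t \<le> n \<Longrightarrow> f t \<in> Q \<and> lo t \<le> f t \<and> f t \<le> hi t"
    by (metis choice)
  have less: "f s < f t" if "s < t" "t \<le> n" for s t
    using f[of s] f[of t] sep[OF that] that by fastforce
  have "inj_on f {..n}"
  proof (rule inj_onI)
    fix s t assume "s \<in> {..n}" "t \<in> {..n}" "f s = f t"
    then show "s = t" using less[of s t] less[of t s] by (cases s t rule: linorder_cases) auto
  qed
  moreover have "f ` {..n} \<subseteq> Q" using f by auto
  ultimately have "card {..n} \<le> card Q" using card_inj_on_le \<open>finite Q\<close> by blast
  then show False using \<open>card Q \<le> n\<close> by simp
qed

lemma unit_sparse_free_window:
  fixes P Q :: "real set"
  assumes "finite P" and sparse: "unit_sparse id P"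
    and size: "5 * (n + 1) \<le> card P" and "finite Q" "card Q \<le> n"
  shows "\<exists>a\<in>P. \<exists>b\<in>P. \<exists>c\<in>P. a + 1 < b \<and> b + 1 < c \<and> (\<forall>q\<in>Q. q < a \<or> c < q)"
proof -
  define zs where "zs = sorted_list_of_set P"
  have len: "length zs = card P" by (simp add: zs_def)
  have mono: "zs ! i < zs ! j" if "i < j" "j < length zs" for i j
    using that strict_sorted_list_of_set[of P] by (simp add: zs_def sorted_wrt_iff_nth_less)
  have in_P: "zs ! i \<in> P" if "i < length zs" for i
    using that \<open>finite P\<close> nth_mem unfolding zs_def by (metis set_sorted_list_of_set)
  have gap: "zs ! j + 1 < zs ! k" if "k = j + 2" "k < length zs" for j k
  proof -
    have "zs ! j < zs ! (j + 1)" "zs ! (j + 1) < zs ! k" using mono that by simp_all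
    moreover have "zs ! j \<in> P" "zs ! (j + 1) \<in> P" "zs ! k \<in> P" using in_P that by simp_all
    ultimately show ?thesis using sparse by (auto simp: unit_sparse_def)
  qed
  have "\<exists>t\<le>n. \<forall>q\<in>Q. q < zs ! (5 * t) \<or> zs ! (5 * t + 4) < q"
  proof (rule disjoint_intervals_avoid_small_set)
    show "zs ! (5 * s + 4) < zs ! (5 * t)" if "s < t" "t \<le> n" for s t
      using mono that len size by simp
  qed (use assms in auto)
  then obtain t where "t \<le> n" and free: "\<forall>q\<in>Q. q < zs ! (5 * t) \<or> zs ! (5 * t + 4) < q"
    by blast
  then have t: "5 * t + 4 < length zs" using len size by simp
  have "zs ! (5 * t) + 1 < zs ! (5 * t + 2)" using t by (intro gap) simp_all
  moreover have "zs ! (5 * t + 2) + 1 < zs ! (5 * t + 4)"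
    using t by (intro gap) simp_all
  moreover have "zs ! (5 * t) \<in> P" "zs ! (5 * t + 2) \<in> P" "zs ! (5 * t + 4) \<in> P"
    using t in_P by simp_all
  ultimately show ?thesis using free by blast
qed

lemma greedy_cp_subset: "greedy_cp lp W Ks \<Longrightarrow> K \<in> set Ks \<Longrightarrow> K \<subseteq> W"
  by (induction rule: greedy_cp.induct) auto

lemma greedy_cp_disjoint:
  "greedy_cp lp W Ks \<Longrightarrow> K1 \<in> set Ks \<Longrightarrow> K2 \<in> set Ks \<Longrightarrow> K1 \<noteq> K2 \<Longrightarrow> K1 \<inter> K2 = {}"
proof (induction arbitrary: K1 K2 rule: greedy_cp.induct)
  case (Cons v W K Ks)
  then show ?case using greedy_cp_subset[OF Cons.hyps(4)] by fastforce
qed simp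

lemma greedy_cp_hd:
  assumes "greedy_cp lp W Ks" "K \<in> set Ks" "u \<in> K" "\<forall>x\<in>W. lp u \<le> lp x + 1"
  shows "K = hd Ks"
  using assms(1)
proof cases
  case (Cons v K0 Ks')
  have "u \<in> W" using greedy_cp_subset assms(1-3) by blast
  then have "u \<in> K0" using Cons assms(4) by auto
  then show ?thesis
    using Cons assms(2,3) greedy_cp_subset[OF Cons(5)] by auto
qed (use assms in simp)

lemma greedy_cp_spread:
  "greedy_cp lp W Ks \<Longrightarrow> K1 \<in> set Ks \<Longrightarrow> K2 \<in> set Ks \<Longrightarrow> K3 \<in> set Ks \<Longrightarrow>
    K1 \<noteq> K2 \<Longrightarrow> K1 \<noteq> K3 \<Longrightarrow> K2 \<noteq> K3 \<Longrightarrow> u1 \<in> K1 \<Longrightarrow> u2 \<in> K2 \<Longrightarrow> u3 \<in> K3 \<Longrightarrow>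
    lp u1 < lp u2 \<Longrightarrow> lp u2 < lp u3 \<Longrightarrow> lp u1 + 1 < lp u3"
proof (induction arbitrary: K1 K2 K3 u1 u2 u3 rule: greedy_cp.induct)
  case (Cons v W K Ks)
  have later: "K' \<subseteq> W - K" if "K' \<in> set Ks" for K'
    using greedy_cp_subset[OF Cons.hyps(4) that] by simp
  have "u1 \<in> W" "u2 \<in> W" "u3 \<in> W"
    using Cons.prems greedy_cp_subset[OF greedy_cp.Cons[OF Cons.hyps]] by blast+
  show ?case
  proof (cases "u1 \<in> K")
    case True
    then have "K1 = K" using Cons.prems(1,7) later by fastforce
    then have K23: "K2 \<in> set Ks" "K3 \<in> set Ks" using Cons.prems by auto
    show ?thesis
    proof (rule ccontr)
      assume close: "\<not> lp u1 + 1 < lp u3"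
      (* then u2 and u3 lie within 1 of every vertex left after K, hence both in the next clique *)
      have "lp v + 1 < lp x" if "x \<in> W - K" for x
        using that Cons.hyps(2,3) by auto
      then have "\<forall>x\<in>W - K. lp u2 \<le> lp x + 1" "\<forall>x\<in>W - K. lp u3 \<le> lp x + 1"
        using True Cons.hyps(3) Cons.prems(10,11) close by fastforce+
      then have "K2 = hd Ks" "K3 = hd Ks"
        using greedy_cp_hd[OF Cons.hyps(4)] K23 Cons.prems(8,9) by blast+
      then show False using Cons.prems(6) by simp
    qed
  next
    case False
    then have "lp v + 1 < lp u1" using Cons.hyps(2,3) \<open>u1 \<in> W\<close> by auto
    then have "u2 \<notin> K" "u3 \<notin> K" using Cons.hyps(3) Cons.prems(10,11) by auto
    then have "K1 \<in> set Ks" "K2 \<in> set Ks" "K3 \<in> set Ks"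
      using False Cons.prems(1-3,7-9) by auto
    then show ?thesis using Cons.IH Cons.prems(4-) by blast
  qed
qed simp

lemma greedy_cp_representatives:
  assumes gcp: "greedy_cp lp W Ks" and A: "A \<subseteq> set Ks" "\<forall>K\<in>A. \<exists>u\<in>K. Q u"
  shows "\<exists>N\<subseteq>\<Union>A. card N = card A \<and> (\<forall>u\<in>N. Q u) \<and> unit_sparse lp N"
proof -
  obtain r where r: "\<And>K. K \<in> A \<Longrightarrow> r K \<in> K \<and> Q (r K)"
    using A(2) by metis
  have "inj_on r A"
  proof (rule inj_onI)
    fix K1 K2 assume K: "K1 \<in> A" "K2 \<in> A" "r K1 = r K2"
    then have "r K1 \<in> K1 \<inter> K2" using r[OF K(1)] r[OF K(2)] by simp
    then show "K1 = K2" using greedy_cp_disjoint[OF gcp, of K1 K2] K(1,2) A(1) by auto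
  qed
  then have "card (r ` A) = card A" by (rule card_image)
  moreover have "unit_sparse lp (r ` A)"
    unfolding unit_sparse_def
  proof (intro ballI impI)
    fix x y z
    assume xyz: "x \<in> r ` A" "y \<in> r ` A" "z \<in> r ` A" and ord: "lp x < lp y" "lp y < lp z"
    then obtain K1 K2 K3 where K: "K1 \<in> A" "K2 \<in> A" "K3 \<in> A"
      and xyz_eq: "x = r K1" "y = r K2" "z = r K3"
      by blast
    then have "K1 \<noteq> K2" "K1 \<noteq> K3" "K2 \<noteq> K3" using ord by auto
    moreover have "x \<in> K1" "y \<in> K2" "z \<in> K3" using K xyz_eq r by auto
    ultimately show "lp x + 1 < lp z"
      using greedy_cp_spread[OF gcp, of K1 K2 K3 x y z] K A(1) ord by auto
  qed
  moreover have "r ` A \<subseteq> \<Union>A" "\<forall>u\<in>r ` A. Q u" using r by auto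
  ultimately show ?thesis by (intro exI[of _ "r ` A"]) simp
qed

lemma not_pit_graph_if_sparse_neighbours:
  fixes lp :: "'a \<Rightarrow> real"
  assumes mg: "multigraph G"
    and C: "C \<subseteq> fst G" "unit_interval_rep G C lp" "inj_on lp C" "connected_in G C"
    and v: "v \<in> fst G - C"
    and N: "N \<subseteq> C" "\<forall>u\<in>N. adj G v u" "5 * (n + 1) \<le> card N" "unit_sparse lp N"
    and X: "X \<subseteq> fst G - {v}" "card X \<le> n"
  shows "\<not> pit_graph (del_vs G X)"
proof -
  have "finite (fst G)" using mg by (simp add: multigraph_def)
  then have fin: "finite C" "finite X" "finite N"
    using C(1) X(1) N(1) by (auto intro: finite_subset)
  have "card (lp ` (X \<inter> C)) \<le> n"
    using X(2) card_image_le[of "X \<inter> C" lp] card_mono[of X "X \<inter> C"] fin(2) by simp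
  moreover have "card (lp ` N) = card N"
    using C(3) N(1) by (simp add: card_image inj_on_subset)
  ultimately obtain a b c where abc: "a \<in> N" "b \<in> N" "c \<in> N" "lp a + 1 < lp b" "lp b + 1 < lp c"
    and avoid: "\<forall>x\<in>X \<inter> C. lp x < lp a \<or> lp c < lp x"
    using unit_sparse_free_window[of "lp ` N" n "lp ` (X \<inter> C)"] N(3,4) fin
    by (auto simp: unit_sparse_image)
  obtain ys where ys: "distinct ys" "set ys = {u \<in> C. lp a \<le> lp u \<and> lp u \<le> lp c}"
      "hd ys = a" "last ys = c" and walk: "\<forall>i. Suc i < length ys \<longrightarrow> adj G (ys ! i) (ys ! Suc i)"
    using unit_interval_path[OF C(2,4) fin(1) C(3), of a c] abc N(1) by auto
  have ys_X: "u \<notin> X" if "u \<in> set ys" for u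
    using that ys(2) avoid[rule_format, of u] by auto
  have adj_X: "adj (del_vs G X) x y \<longleftrightarrow> adj G x y" if "x \<notin> X" "y \<notin> X" for x y
    using that by (simp add: adj_del_vs)
  have nonadj: "\<not> adj (del_vs G X) x y" if "x \<in> C" "y \<in> C" "lp x + 1 < lp y" for x y
  proof -
    have "x \<noteq> y" "\<not> \<bar>lp x - lp y\<bar> \<le> 1" using that(3) by auto
    then have "\<not> adj G x y" using that(1,2) C(2) unfolding unit_interval_rep_def by blast
    then show ?thesis by (simp add: adj_del_vs)
  qed
  have "a \<in> set ys" "b \<in> set ys" "c \<in> set ys" using ys(2) abc N(1) by auto
  then have "a \<notin> X" "b \<notin> X" "c \<notin> X" "v \<notin> X" using ys_X X(1) by auto
  show ?thesis
  proof (rule not_pit_graph_if_claw_on_cycle[OF multigraph_del_vs[OF mg] ys(1,3,4)])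
    show "\<forall>i. Suc i < length ys \<longrightarrow> adj (del_vs G X) (ys ! i) (ys ! Suc i)"
    proof (intro allI impI)
      fix i assume i: "Suc i < length ys"
      then have "ys ! i \<notin> X" "ys ! Suc i \<notin> X" using ys_X by simp_all
      then show "adj (del_vs G X) (ys ! i) (ys ! Suc i)" using walk i adj_X by simp
    qed
    show "v \<notin> set ys" using v ys(2) by auto
    show "b \<in> set ys" by fact
    show "adj (del_vs G X) v a" "adj (del_vs G X) v b" "adj (del_vs G X) v c"
      using N(2) abc(1-3) adj_X \<open>a \<notin> X\<close> \<open>b \<notin> X\<close> \<open>c \<notin> X\<close> \<open>v \<notin> X\<close> by simp_all
    show "a \<noteq> b" "a \<noteq> c" "b \<noteq> c" using abc(4,5) by auto
    show "\<not> adj (del_vs G X) a b" "\<not> adj (del_vs G X) a c" "\<not> adj (del_vs G X) b c"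
      using nonadj[of a b] nonadj[of a c] nonadj[of b c] abc N(1) by auto
  qed
qed

lemma pitvd_yes_del_vs_iff:
  assumes mg: "multigraph G" and "v \<in> fst G"
    and every_solution_has_v: "\<And>X. X \<subseteq> fst G \<Longrightarrow> int (card X) \<le> k \<Longrightarrow>
      simple_mg (del_vs G X) \<Longrightarrow> pit_graph (del_vs G X) \<Longrightarrow> v \<in> X"
  shows "pitvd_yes G k \<longleftrightarrow> pitvd_yes (del_vs G {v}) (k - 1)"
proof
  have fin: "finite X" if "X \<subseteq> fst G" for X
    using mg that by (auto simp: multigraph_def intro: finite_subset)
  assume "pitvd_yes G k"
  then obtain X where X: "X \<subseteq> fst G" "int (card X) \<le> k"
    "simple_mg (del_vs G X)" "pit_graph (del_vs G X)"
    by (auto simp: pitvd_yes_def)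
  then have "v \<in> X" by (rule every_solution_has_v)
  then have "del_vs (del_vs G {v}) (X - {v}) = del_vs G X"
    by (simp add: del_vs_del_vs insert_absorb)
  moreover have "int (card (X - {v})) \<le> k - 1"
    using X(2) card_Suc_Diff1[OF fin[OF X(1)] \<open>v \<in> X\<close>] by linarith
  ultimately show "pitvd_yes (del_vs G {v}) (k - 1)"
    unfolding pitvd_yes_def using X by (intro exI[of _ "X - {v}"]) auto
next
  assume "pitvd_yes (del_vs G {v}) (k - 1)"
  then obtain X where X: "X \<subseteq> fst G - {v}" "int (card X) \<le> k - 1"
    "simple_mg (del_vs G ({v} \<union> X))" "pit_graph (del_vs G ({v} \<union> X))"
    by (auto simp: pitvd_yes_def del_vs_del_vs)
  moreover have "finite X"
    using mg X(1) by (auto simp: multigraph_def intro: finite_subset)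
  then have "card (insert v X) = card X + 1" using X(1) by (subst card_insert_disjoint) auto
  ultimately show "pitvd_yes G k"
    unfolding pitvd_yes_def using \<open>v \<in> fst G\<close> by (intro exI[of _ "insert v X"]) auto
qed

theorem lemma34:
  fixes G :: "'a mgraph" and k :: int and S V1 C :: "'a set" and v :: 'a
    and lp :: "'a \<Rightarrow> real" and Ks :: "'a set list"
  assumes "multigraph G" and "0 \<le> k"
    and "S \<subseteq> fst G"
    and "simple_mg (del_vs G S)" and "pit_graph (del_vs G S)"
    and "V1 = \<Union>{D \<in> components (del_vs G S). has_cycle_in (del_vs G S) D}"
    and "unit_interval_rep (induced G V1) V1 lp" and "inj_on lp V1"
    and "greedy_cp lp V1 Ks"
    and "C \<in> components (induced G V1)"
    and "v \<in> S"
    and "6 * k + 5 \<le> int (card {K \<in> set Ks. K \<subseteq> C \<and> (\<exists>u\<in>K. adj G v u)})"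
  shows "pitvd_yes G k \<longleftrightarrow> pitvd_yes (del_vs G {v}) (k - 1)"
proof (rule pitvd_yes_del_vs_iff[OF assms(1)])
  show "v \<in> fst G" using assms(3,11) by auto
  have C_V1: "C \<subseteq> V1" using components_subset[OF assms(10)] by (simp add: fst_induced)
  moreover have "V1 \<subseteq> fst G - S" using assms(6) components_subset[of _ "del_vs G S"] by auto
  ultimately have C: "C \<subseteq> fst G" "v \<in> fst G - C" using assms(3,11) by auto
  define A where "A = {K \<in> set Ks. K \<subseteq> C \<and> (\<exists>u\<in>K. adj G v u)}"
  obtain N where N: "N \<subseteq> \<Union>A" "card N = card A" "\<forall>u\<in>N. adj G v u" "unit_sparse lp N"
    using greedy_cp_representatives[OF assms(9), of A "adj G v"] unfolding A_def by blast
  have "N \<subseteq> C" using N(1) by (auto simp: A_def)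
  have "int (5 * (nat k + 1)) \<le> int (card N)" using assms(2,12) N(2) unfolding A_def by simp
  then have "5 * (nat k + 1) \<le> card N" unfolding of_nat_le_iff .
  fix X assume X: "X \<subseteq> fst G" "int (card X) \<le> k" "simple_mg (del_vs G X)" "pit_graph (del_vs G X)"
  show "v \<in> X"
  proof (rule ccontr)
    assume "v \<notin> X"
    then have "\<not> pit_graph (del_vs G X)"
      using not_pit_graph_if_sparse_neighbours[OF assms(1) C(1)
          unit_interval_rep_of_induced[OF assms(7) C_V1] inj_on_subset[OF assms(8) C_V1]
          components_induced_connected_in[OF assms(1,10)] C(2) \<open>N \<subseteq> C\<close> N(3)
          \<open>5 * (nat k + 1) \<le> card N\<close> N(4), of X] X(1,2) assms(2)
      by (auto simp: le_nat_iff)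
    with X(4) show False by simp
  qed
qed

end
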